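(* Let $((A, \cdot), N)$ be a Nijenhuis algebra. Then the infinitesimal $(\mu_1, N_1)$ of any formal deformation of the Nijenhuis algebra $((A, \cdot), N)$ is a $2$-cocycle in the cochain complex $\{ \oplus_{n \geq 0} C^n_{\mathrm{NAlg}} ((A, N)), \delta_{\mathrm{NAlg}} \}$. Moreover, the cohomology class of the corresponding $2$-cocycle depends only on the equivalence class of the formal deformation.
   Context: Work over a field $\mathbf{k}$ of characteristic $0$. A Nijenhuis algebra $((A,\cdot),N)$ is an associative algebra $(A,\cdot)$ with a linear map $N:A\to A$ satisfying $N(a)\cdot N(b) = N(N(a)\cdot b + a\cdot N(b) - N(a\cdot b))$ for all $a,b\in A$. Write $\mu(a,b)=a\cdot b$. Formal deformation: formal sums $\mu_t=\sum_{i\ge 0} t^i\mu_i \in \mathrm{Hom}(A^{\otimes 2},A)[[t]]$ with $\mu_0=\mu$ and $N_t=\sum_{i\ge0} t^i N_i\in \mathrm{Hom}(A,A)[[t]]$ with $N_0=N$ such that $(A[[t]],\mu_t)$ is an associative algebra over $\mathbf{k}[[t]]$ and the $\mathbf{k}[[t]]$-linear extension $N_t$ is a Nijenhuis operator on it. The pair $(\mu_1,N_1)$ is called its infinitesimal. Two formal deformations $((A[[t]],\mu_t),N_t)$ and $((A[[t]],\mu'_t),N'_t)$ are equivalent if there is a $\mathbf{k}[[t]]$-linear map $\varphi_t=\sum_{i\ge0}t^i\varphi_i$, $\varphi_i\in\mathrm{Hom}(A,A)$, $\varphi_0=\mathrm{Id}_A$, with $\varphi_t(\mu_t(a,b))=\mu'_t(\varphi_t(a),\varphi_t(b))$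 and $\varphi_t\circ N_t=N'_t\circ\varphi_t$. The cochain complex: $C^0_{\mathrm{NAlg}}((A,N))=0$, $C^1_{\mathrm{NAlg}}((A,N))=\mathrm{Hom}(A,A)$, and $C^n_{\mathrm{NAlg}}((A,N))=\mathrm{Hom}(A^{\otimes n},A)\oplus\mathrm{Hom}(A^{\otimes n-1},A)$ for $n\ge2$, with $\delta_{\mathrm{NAlg}}(f)=(\delta_{\mathrm{Hoch}}(f),-\partial^N(f))$ for $f\in C^1$ and $\delta_{\mathrm{NAlg}}(\chi,F)=(\delta_{\mathrm{Hoch}}(\chi),\, d_N(F)+(-1)^n\partial^N(\chi))$ for $(\chi,F)\in C^n$, $n\ge2$. Here, for $f\in\mathrm{Hom}(A^{\otimes n},A)$: - $\delta_{\mathrm{Hoch}}$ is the Hochschild coboundary: $(\delta_{\mathrm{Hoch}}f)(a_1,\dots,a_{n+1})=a_1\cdot f(a_2,\dots,a_{n+1})+\sum_{i=1}^n(-1)^i f(a_1,\dots,a_i\cdot a_{i+1},\dots,a_{n+1})+(-1)^{n+1}f(a_1,\dots,a_n)\cdot a_{n+1}$; - $(d_Nf)(a_1,\dots,a_{n+1})=N(a_1)\cdot f(a_2,\dots,a_{n+1})-(-1)^n f(a_1,\dots,a_n)\cdot N(a_{n+1})+\sum_{i=1}^n(-1)^i f(a_1,\dots,a_{i-1},N(a_i)\cdot a_{i+1}+a_i\cdot N(a_{i+1})-N(a_i\cdot a_{i+1}),\dots,a_{n+1}) - N\big((\delta_{\mathrm{Hoch}}f)(a_1,\dots,a_{n+1})\big)$;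 - $\partial^N(f)(a_1,\dots,a_n)=f(N(a_1),\dots,N(a_n))-\sum_{i}N\big(f(N(a_1),\dots,a_i,\dots,N(a_n))\big)+\sum_{i<j}N^2\big(f(N(a_1),\dots,a_i,\dots,a_j,\dots,N(a_n))\big)-\cdots+(-1)^nN^n(f(a_1,\dots,a_n))$ (the $k$-th sum runs over choices of $k$ arguments left without $N$, with $N^k$ applied outside and sign $(-1)^k$). $(\delta_{\mathrm{NAlg}})^2=0$; its cohomology is $H^\bullet_{\mathrm{NAlg}}((A,N))$. *)

theory Defs
  imports Complex_Main
begin

text \<open>The underlying vector space A is a type 'a with a k-vector space structure given by
  scale :: 'k \<Rightarrow> 'a \<Rightarrow> 'a, where 'k is a field of characteristic 0.
  Hom(A,A) = k-linear maps, Hom(A\<otimes>A,A) = k-bilinear maps.\<close>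

definition klin :: "('k::field \<Rightarrow> 'a::ab_group_add \<Rightarrow> 'a) \<Rightarrow> ('a \<Rightarrow> 'a) \<Rightarrow> bool" where
  "klin scale f \<longleftrightarrow> Vector_Spaces.linear scale scale f"

definition kbilin :: "('k::field \<Rightarrow> 'a::ab_group_add \<Rightarrow> 'a) \<Rightarrow> ('a \<Rightarrow> 'a \<Rightarrow> 'a) \<Rightarrow> bool" where
  "kbilin scale m \<longleftrightarrow> (\<forall>x. klin scale (m x)) \<and> (\<forall>y. klin scale (\<lambda>x. m x y))"

definition assoc_algebra :: "('k::field \<Rightarrow> 'a::ab_group_add \<Rightarrow> 'a) \<Rightarrow> ('a \<Rightarrow> 'a \<Rightarrow> 'a) \<Rightarrow> bool" where
  "assoc_algebra scale mu \<longleftrightarrow> vector_space scale \<and> kbilin scale mu \<and>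
     (\<forall>a b c. mu (mu a b) c = mu a (mu b c))"

definition nijenhuis_identity :: "('a::ab_group_add \<Rightarrow> 'a \<Rightarrow> 'a) \<Rightarrow> ('a \<Rightarrow> 'a) \<Rightarrow> bool" where
  "nijenhuis_identity mu N \<longleftrightarrow>
     (\<forall>a b. mu (N a) (N b) = N (mu (N a) b + mu a (N b) - N (mu a b)))"

definition nijenhuis_algebra ::
  "('k::field \<Rightarrow> 'a::ab_group_add \<Rightarrow> 'a) \<Rightarrow> ('a \<Rightarrow> 'a \<Rightarrow> 'a) \<Rightarrow> ('a \<Rightarrow> 'a) \<Rightarrow> bool" where
  "nijenhuis_algebra scale mu N \<longleftrightarrow>
     assoc_algebra scale mu \<and> klin scale N \<and> nijenhuis_identity mu N"

section \<open>Formal power series A[[t]] = sequences nat \<Rightarrow> 'a (coefficient of t^n)\<close>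

text \<open>k[[t]]-bilinear extension of \<mu>_t = \<Sum> t^i \<mu>_i to A[[t]]:
  coefficient of t^n in \<mu>_t(x,y) is \<Sum>_{i+j+l=n} \<mu>_i(x_j, y_l).\<close>
definition ser_mul :: "(nat \<Rightarrow> 'a \<Rightarrow> 'a \<Rightarrow> 'a::ab_group_add) \<Rightarrow> (nat \<Rightarrow> 'a) \<Rightarrow> (nat \<Rightarrow> 'a) \<Rightarrow> nat \<Rightarrow> 'a" where
  "ser_mul mus x y n = (\<Sum>i\<le>n. \<Sum>j\<le>n - i. mus i (x j) (y (n - i - j)))"

text \<open>k[[t]]-linear extension of N_t = \<Sum> t^i N_i to A[[t]].\<close>
definition ser_app :: "(nat \<Rightarrow> 'a \<Rightarrow> 'a::ab_group_add) \<Rightarrow> (nat \<Rightarrow> 'a) \<Rightarrow> nat \<Rightarrow> 'a" where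
  "ser_app Ns x n = (\<Sum>i\<le>n. Ns i (x (n - i)))"

definition formal_deformation ::
  "('k::field \<Rightarrow> 'a::ab_group_add \<Rightarrow> 'a) \<Rightarrow> ('a \<Rightarrow> 'a \<Rightarrow> 'a) \<Rightarrow> ('a \<Rightarrow> 'a)
    \<Rightarrow> (nat \<Rightarrow> 'a \<Rightarrow> 'a \<Rightarrow> 'a) \<Rightarrow> (nat \<Rightarrow> 'a \<Rightarrow> 'a) \<Rightarrow> bool" where
  "formal_deformation scale mu N mus Ns \<longleftrightarrow>
     mus 0 = mu \<and> Ns 0 = N \<and>
     (\<forall>i. kbilin scale (mus i)) \<and> (\<forall>i. klin scale (Ns i)) \<and>
     (\<forall>x y z. ser_mul mus (ser_mul mus x y) z = ser_mul mus x (ser_mul mus y z)) \<and>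
     (\<forall>x y. ser_mul mus (ser_app Ns x) (ser_app Ns y) =
        ser_app Ns (\<lambda>n. ser_mul mus (ser_app Ns x) y n + ser_mul mus x (ser_app Ns y) n
                        - ser_app Ns (ser_mul mus x y) n))"

definition equivalent_deformations ::
  "('k::field \<Rightarrow> 'a::ab_group_add \<Rightarrow> 'a)
    \<Rightarrow> (nat \<Rightarrow> 'a \<Rightarrow> 'a \<Rightarrow> 'a) \<Rightarrow> (nat \<Rightarrow> 'a \<Rightarrow> 'a)
    \<Rightarrow> (nat \<Rightarrow> 'a \<Rightarrow> 'a \<Rightarrow> 'a) \<Rightarrow> (nat \<Rightarrow> 'a \<Rightarrow> 'a) \<Rightarrow> bool" where
  "equivalent_deformations scale mus Ns mus' Ns' \<longleftrightarrow>
     (\<exists>phis :: nat \<Rightarrow> 'a \<Rightarrow> 'a. phis 0 = id \<and> (\<forall>i. klin scale (phis i)) \<and>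
        (\<forall>x y. ser_app phis (ser_mul mus x y) = ser_mul mus' (ser_app phis x) (ser_app phis y)) \<and>
        (\<forall>x. ser_app phis (ser_app Ns x) = ser_app Ns' (ser_app phis x)))"

definition hoch1 :: "('a::ab_group_add \<Rightarrow> 'a \<Rightarrow> 'a) \<Rightarrow> ('a \<Rightarrow> 'a) \<Rightarrow> 'a \<Rightarrow> 'a \<Rightarrow> 'a" where
  "hoch1 mu f a1 a2 = mu a1 (f a2) - f (mu a1 a2) + mu (f a1) a2"

definition hoch2 :: "('a::ab_group_add \<Rightarrow> 'a \<Rightarrow> 'a) \<Rightarrow> ('a \<Rightarrow> 'a \<Rightarrow> 'a) \<Rightarrow> 'a \<Rightarrow> 'a \<Rightarrow> 'a \<Rightarrow> 'a" where
  "hoch2 mu f a1 a2 a3 = mu a1 (f a2 a3) - f (mu a1 a2) a3 + f a1 (mu a2 a3) - mu (f a1 a2) a3"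

definition dN1 :: "('a::ab_group_add \<Rightarrow> 'a \<Rightarrow> 'a) \<Rightarrow> ('a \<Rightarrow> 'a) \<Rightarrow> ('a \<Rightarrow> 'a) \<Rightarrow> 'a \<Rightarrow> 'a \<Rightarrow> 'a" where
  "dN1 mu N f a1 a2 = mu (N a1) (f a2) + mu (f a1) (N a2)
     - f (mu (N a1) a2 + mu a1 (N a2) - N (mu a1 a2)) - N (hoch1 mu f a1 a2)"

definition partialN1 :: "('a::ab_group_add \<Rightarrow> 'a) \<Rightarrow> ('a \<Rightarrow> 'a) \<Rightarrow> 'a \<Rightarrow> 'a" where
  "partialN1 N f a1 = f (N a1) - N (f a1)"

definition partialN2 :: "('a::ab_group_add \<Rightarrow> 'a) \<Rightarrow> ('a \<Rightarrow> 'a \<Rightarrow> 'a) \<Rightarrow> 'a \<Rightarrow> 'a \<Rightarrow> 'a" where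
  "partialN2 N f a1 a2 = f (N a1) (N a2) - N (f a1 (N a2)) - N (f (N a1) a2) + N (N (f a1 a2))"

definition deltaNAlg1 :: "('a::ab_group_add \<Rightarrow> 'a \<Rightarrow> 'a) \<Rightarrow> ('a \<Rightarrow> 'a) \<Rightarrow> ('a \<Rightarrow> 'a)
    \<Rightarrow> ('a \<Rightarrow> 'a \<Rightarrow> 'a) \<times> ('a \<Rightarrow> 'a)" where
  "deltaNAlg1 mu N f = (hoch1 mu f, \<lambda>a. - partialN1 N f a)"

definition deltaNAlg2 :: "('a::ab_group_add \<Rightarrow> 'a \<Rightarrow> 'a) \<Rightarrow> ('a \<Rightarrow> 'a) \<Rightarrow> ('a \<Rightarrow> 'a \<Rightarrow> 'a) \<times> ('a \<Rightarrow> 'a)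
    \<Rightarrow> ('a \<Rightarrow> 'a \<Rightarrow> 'a \<Rightarrow> 'a) \<times> ('a \<Rightarrow> 'a \<Rightarrow> 'a)" where
  "deltaNAlg2 mu N c = (hoch2 mu (fst c), \<lambda>a1 a2. dN1 mu N (snd c) a1 a2 + partialN2 N (fst c) a1 a2)"

definition cochain1 :: "('k::field \<Rightarrow> 'a::ab_group_add \<Rightarrow> 'a) \<Rightarrow> ('a \<Rightarrow> 'a) \<Rightarrow> bool" where
  "cochain1 scale f \<longleftrightarrow> klin scale f"

definition cochain2 :: "('k::field \<Rightarrow> 'a::ab_group_add \<Rightarrow> 'a) \<Rightarrow> ('a \<Rightarrow> 'a \<Rightarrow> 'a) \<times> ('a \<Rightarrow> 'a) \<Rightarrow> bool" where
  "cochain2 scale c \<longleftrightarrow> kbilin scale (fst c) \<and> klin scale (snd c)"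

definition cocycle2 :: "('k::field \<Rightarrow> 'a::ab_group_add \<Rightarrow> 'a) \<Rightarrow> ('a \<Rightarrow> 'a \<Rightarrow> 'a) \<Rightarrow> ('a \<Rightarrow> 'a)
    \<Rightarrow> ('a \<Rightarrow> 'a \<Rightarrow> 'a) \<times> ('a \<Rightarrow> 'a) \<Rightarrow> bool" where
  "cocycle2 scale mu N c \<longleftrightarrow> cochain2 scale c \<and> deltaNAlg2 mu N c = (\<lambda>a b c. 0, \<lambda>a b. 0)"

definition cohomologous2 :: "('k::field \<Rightarrow> 'a::ab_group_add \<Rightarrow> 'a) \<Rightarrow> ('a \<Rightarrow> 'a \<Rightarrow> 'a) \<Rightarrow> ('a \<Rightarrow> 'a)
    \<Rightarrow> ('a \<Rightarrow> 'a \<Rightarrow> 'a) \<times> ('a \<Rightarrow> 'a) \<Rightarrow> ('a \<Rightarrow> 'a \<Rightarrow> 'a) \<times> ('a \<Rightarrow> 'a) \<Rightarrow> bool" where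
  "cohomologous2 scale mu N c c' \<longleftrightarrow>
     (\<exists>f. cochain1 scale f \<and>
        deltaNAlg1 mu N f = (\<lambda>a b. fst c' a b - fst c a b, \<lambda>a. snd c' a - snd c a))"

end

theory Submission
  imports Defs
begin

text \<open>Everything is read off the coefficient of \<open>t\<close> in the defining identities of a deformation,
  evaluated on elements of \<open>A \<subseteq> A[[t]]\<close>. Associativity of \<open>\<mu>\<^sub>t\<close> gives \<open>\<delta>\<^sub>H\<^sub>o\<^sub>c\<^sub>h \<mu>\<^sub>1 = 0\<close>, and the
  Nijenhuis identity for \<open>N\<^sub>t\<close> gives \<open>d\<^sub>N N\<^sub>1 + \<partial>\<^sup>N \<mu>\<^sub>1 = 0\<close>. For an equivalence
  \<open>\<phi>\<^sub>t = id + t \<phi>\<^sub>1 + \<dots>\<close> the same comparison gives \<open>\<mu>\<^sub>1' = \<mu>\<^sub>1 - \<delta>\<^sub>H\<^sub>o\<^sub>c\<^sub>h \<phi>\<^sub>1\<close> and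
  \<open>N\<^sub>1' = N\<^sub>1 + \<partial>\<^sup>N \<phi>\<^sub>1\<close>, that is \<open>(\<mu>\<^sub>1', N\<^sub>1') - (\<mu>\<^sub>1, N\<^sub>1) = \<delta>\<^sub>N\<^sub>A\<^sub>l\<^sub>g (-\<phi>\<^sub>1)\<close>.\<close>

lemma klin_module_hom: "klin scale f \<Longrightarrow> module_hom scale scale f"
  by (simp add: klin_def module_hom_iff_linear)

lemmas klin_zero = module_hom.zero[OF klin_module_hom]
  and klin_add = module_hom.add[OF klin_module_hom]
  and klin_neg = module_hom.neg[OF klin_module_hom]
  and klin_diff = module_hom.diff[OF klin_module_hom]

lemma klin_uminus: "klin scale f \<Longrightarrow> klin scale (\<lambda>x. - f x)"
  unfolding klin_def module_hom_iff_linear[symmetric]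
  by (simp add: module_hom_iff module.scale_minus_right)

lemma kbilin_zero_left: "kbilin scale m \<Longrightarrow> m 0 y = 0"
  and kbilin_zero_right: "kbilin scale m \<Longrightarrow> m x 0 = 0"
  and kbilin_neg_left: "kbilin scale m \<Longrightarrow> m (- x) y = - m x y"
  and kbilin_neg_right: "kbilin scale m \<Longrightarrow> m x (- y) = - m x y"
  unfolding kbilin_def using klin_zero klin_neg by metis+

definition ser_const :: "'a::zero \<Rightarrow> nat \<Rightarrow> 'a" where
  "ser_const a n = (if n = 0 then a else 0)"

lemma ser_const_0 [simp]: "ser_const a 0 = a"
  and ser_const_Suc0 [simp]: "ser_const a (Suc 0) = 0"
  by (simp_all add: ser_const_def)

lemma ser_mul_0: "ser_mul mus x y 0 = mus 0 (x 0) (y 0)"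
  by (simp add: ser_mul_def)

lemma ser_mul_Suc0:
  "ser_mul mus x y (Suc 0) = mus 0 (x 0) (y (Suc 0)) + mus 0 (x (Suc 0)) (y 0) + mus 1 (x 0) (y 0)"
  by (simp add: ser_mul_def atMost_Suc algebra_simps)

lemma ser_app_0: "ser_app Ns x 0 = Ns 0 (x 0)"
  by (simp add: ser_app_def)

lemma ser_app_Suc0: "ser_app Ns x (Suc 0) = Ns 0 (x (Suc 0)) + Ns 1 (x 0)"
  by (simp add: ser_app_def atMost_Suc algebra_simps)

lemmas ser_coeffs_01 = ser_mul_0 ser_mul_Suc0 ser_app_0 ser_app_Suc0

lemma hoch2_eq_0_if_ser_mul_assoc:
  assumes "kbilin scale (mus 0)"
    and "\<And>x y z. ser_mul mus (ser_mul mus x y) z = ser_mul mus x (ser_mul mus y z)"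
  shows "hoch2 (mus 0) (mus 1) a b c = 0"
proof -
  have "ser_mul mus (ser_mul mus (ser_const a) (ser_const b)) (ser_const c) 1
      = ser_mul mus (ser_const a) (ser_mul mus (ser_const b) (ser_const c)) 1"
    using assms(2) by simp
  then show ?thesis
    by (simp add: ser_coeffs_01 kbilin_zero_left[OF assms(1)] kbilin_zero_right[OF assms(1)]
        hoch2_def algebra_simps)
qed

lemma dN1_add_partialN2_eq_0_if_ser_nijenhuis:
  assumes "kbilin scale (mus 0)" and "klin scale (Ns 0)"
    and "\<And>x y. ser_mul mus (ser_app Ns x) (ser_app Ns y) =
        ser_app Ns (\<lambda>n. ser_mul mus (ser_app Ns x) y n + ser_mul mus x (ser_app Ns y) n
                        - ser_app Ns (ser_mul mus x y) n)"
  shows "dN1 (mus 0) (Ns 0) (Ns 1) a b + partialN2 (Ns 0) (mus 1) a b = 0"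
proof -
  let ?a = "ser_const a" and ?b = "ser_const b"
  have "ser_mul mus (ser_app Ns ?a) (ser_app Ns ?b) 1 =
      ser_app Ns (\<lambda>n. ser_mul mus (ser_app Ns ?a) ?b n + ser_mul mus ?a (ser_app Ns ?b) n
                      - ser_app Ns (ser_mul mus ?a ?b) n) 1"
    using assms(3) by metis
  then show ?thesis
    by (simp add: ser_coeffs_01 kbilin_zero_left[OF assms(1)] kbilin_zero_right[OF assms(1)]
        klin_zero[OF assms(2)] klin_add[OF assms(2)] klin_diff[OF assms(2)]
        dN1_def partialN2_def hoch1_def algebra_simps)
qed

lemma ser_mul_equivalence_first_order:
  assumes "kbilin scale (mus 0)" and "mus' 0 = mus 0" and "phis 0 = id"
    and "\<And>x y. ser_app phis (ser_mul mus x y) = ser_mul mus' (ser_app phis x) (ser_app phis y)"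
  shows "mus' 1 a b = mus 1 a b - hoch1 (mus 0) (phis 1) a b"
proof -
  have "ser_app phis (ser_mul mus (ser_const a) (ser_const b)) 1
      = ser_mul mus' (ser_app phis (ser_const a)) (ser_app phis (ser_const b)) 1"
    using assms(4) by simp
  then show ?thesis
    using assms(2,3)
    by (simp add: ser_coeffs_01 kbilin_zero_left[OF assms(1)] kbilin_zero_right[OF assms(1)]
        hoch1_def algebra_simps)
qed

lemma ser_app_equivalence_first_order:
  assumes "klin scale (Ns 0)" and "Ns' 0 = Ns 0" and "phis 0 = id"
    and "\<And>x. ser_app phis (ser_app Ns x) = ser_app Ns' (ser_app phis x)"
  shows "Ns' 1 a = Ns 1 a + partialN1 (Ns 0) (phis 1) a"
proof -
  have "ser_app phis (ser_app Ns (ser_const a)) 1 = ser_app Ns' (ser_app phis (ser_const a)) 1"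
    using assms(4) by simp
  then show ?thesis
    using assms(2,3) by (simp add: ser_coeffs_01 klin_zero[OF assms(1)] partialN1_def algebra_simps)
qed

lemma deltaNAlg1_uminus:
  assumes "kbilin scale mu" and "klin scale N"
  shows "deltaNAlg1 mu N (\<lambda>x. - f x) = (\<lambda>a b. - hoch1 mu f a b, partialN1 N f)"
  by (simp add: deltaNAlg1_def hoch1_def partialN1_def kbilin_neg_left[OF assms(1)]
      kbilin_neg_right[OF assms(1)] klin_neg[OF assms(2)] fun_eq_iff)

lemma formal_deformation_infinitesimal_cocycle:
  assumes "formal_deformation scale mu N mus Ns"
  shows "cocycle2 scale mu N (mus 1, Ns 1)"
proof -
  from assms have mu: "mus 0 = mu" and N: "Ns 0 = N" and mus: "\<And>i. kbilin scale (mus i)"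
    and Ns: "\<And>i. klin scale (Ns i)"
    and assoc: "\<And>x y z. ser_mul mus (ser_mul mus x y) z = ser_mul mus x (ser_mul mus y z)"
    and nijenhuis: "\<And>x y. ser_mul mus (ser_app Ns x) (ser_app Ns y) =
        ser_app Ns (\<lambda>n. ser_mul mus (ser_app Ns x) y n + ser_mul mus x (ser_app Ns y) n
                        - ser_app Ns (ser_mul mus x y) n)"
    by (simp_all add: formal_deformation_def)
  have "hoch2 mu (mus 1) a b c = 0" for a b c
    using hoch2_eq_0_if_ser_mul_assoc[OF mus assoc] unfolding mu .
  moreover have "dN1 mu N (Ns 1) a b + partialN2 N (mus 1) a b = 0" for a b
    using dN1_add_partialN2_eq_0_if_ser_nijenhuis[OF mus Ns nijenhuis] unfolding mu N .
  ultimately show ?thesis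
    using mus Ns
    by (simp add: cocycle2_def cochain2_def deltaNAlg2_def fun_eq_iff del: One_nat_def)
qed

lemma equivalent_deformations_cohomologous:
  assumes "formal_deformation scale mu N mus Ns" and "formal_deformation scale mu N mus' Ns'"
    and "equivalent_deformations scale mus Ns mus' Ns'"
  shows "cohomologous2 scale mu N (mus 1, Ns 1) (mus' 1, Ns' 1)"
proof -
  from assms(1,2) have "mus 0 = mu" "mus' 0 = mu" "Ns 0 = N" "Ns' 0 = N"
    and mu: "kbilin scale mu" and N: "klin scale N"
    by (auto simp: formal_deformation_def)
  moreover obtain phis where "phis 0 = id" and phi: "klin scale (phis 1)"
    and "\<And>x y. ser_app phis (ser_mul mus x y) = ser_mul mus' (ser_app phis x) (ser_app phis y)"
    and "\<And>x. ser_app phis (ser_app Ns x) = ser_app Ns' (ser_app phis x)"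
    using assms(3) unfolding equivalent_deformations_def by blast
  ultimately have "mus' 1 a b = mus 1 a b - hoch1 mu (phis 1) a b"
    and "Ns' 1 a = Ns 1 a + partialN1 N (phis 1) a" for a b
    using ser_mul_equivalence_first_order[of scale mus mus' phis]
      ser_app_equivalence_first_order[of scale Ns Ns' phis]
    by simp_all
  then have "deltaNAlg1 mu N (\<lambda>x. - phis 1 x)
      = (\<lambda>a b. mus' 1 a b - mus 1 a b, \<lambda>a. Ns' 1 a - Ns 1 a)"
    by (simp add: deltaNAlg1_uminus[OF mu N] fun_eq_iff)
  with klin_uminus[OF phi] show ?thesis
    unfolding cohomologous2_def cochain1_def by auto
qed

theorem theorem4p1:
  fixes scale :: "'k::field_char_0 \<Rightarrow> 'a::ab_group_add \<Rightarrow> 'a"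
    and mu :: "'a \<Rightarrow> 'a \<Rightarrow> 'a" and N :: "'a \<Rightarrow> 'a"
  assumes "nijenhuis_algebra scale mu N"
  shows "(\<forall>mus Ns. formal_deformation scale mu N mus Ns \<longrightarrow>
            cocycle2 scale mu N (mus 1, Ns 1))
       \<and> (\<forall>mus Ns mus' Ns'. formal_deformation scale mu N mus Ns
            \<longrightarrow> formal_deformation scale mu N mus' Ns'
            \<longrightarrow> equivalent_deformations scale mus Ns mus' Ns'
            \<longrightarrow> cohomologous2 scale mu N (mus 1, Ns 1) (mus' 1, Ns' 1))"
  using formal_deformation_infinitesimal_cocycle equivalent_deformations_cohomologous by blast

end
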